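(* For all integers $n\geq 1$, $m\geq 0$, $\operatorname{diam}(Y_{n,m})=\operatorname{ecc}_{Z_{n,m}}(0)$, where $\operatorname{ecc}_{Z_{n,m}}(0)$ is the maximum graph distance in $Z_{n,m}$ from the all-zero vertex $0$ to any vertex.
   Context: Elements of $\mathbb{Z}_n$ are identified with their representatives in $\{0,\dots,n-1\}$. For a subset $S\subseteq\mathbb{Z}$, consider vertices $u=(u_0,\dots,u_{m+1})\in\mathbb{Z}_n\times S^m\times\mathbb{Z}_n$ with $\sum_{i=0}^{m+1}u_i\equiv0\pmod n$; two such vertices $u,v$ are adjacent if there is $0\leq i\leq m$ such that $u_j=v_j$ for all $j\notin\{i,i+1\}$ and either ($u_i=v_i+1$, $u_{i+1}=v_{i+1}-1$) or ($u_i=v_i-1$, $u_{i+1}=v_{i+1}+1$), with arithmetic in coordinates $0,m+1$ taken in $\mathbb{Z}_n$ and in coordinates $1,\dots,m$ in $\mathbb{Z}$. The Yoke graph $Y_{n,m}$ is this graph for $S=\{0,1\}$; the dYoke graph $Z_{n,m}$ is this graph for $S=\{-1,0,1\}$. The vertex $(0,\dots,0)$ is denoted $0$. *)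

theory Defs
  imports Main "HOL-Library.Extended_Nat"
begin

text \<open>A vertex (u_0,...,u_{m+1}) is represented as an int list of length m+2.
  Coordinates 0 and m+1 are elements of Z_n (representatives in {0..n-1}),
  coordinates 1..m lie in S.\<close>

definition gvert :: "nat \<Rightarrow> nat \<Rightarrow> int set \<Rightarrow> int list set" where
  "gvert n m S = {u. length u = m + 2 \<and> u ! 0 \<in> {0..<int n} \<and> u ! (m+1) \<in> {0..<int n}
      \<and> (\<forall>j\<in>{1..m}. u ! j \<in> S) \<and> (\<Sum>j<m+2. u ! j) mod int n = 0}"

definition coord_add :: "nat \<Rightarrow> nat \<Rightarrow> nat \<Rightarrow> int \<Rightarrow> int \<Rightarrow> int" where
  "coord_add n m j x d = (if j = 0 \<or> j = m + 1 then (x + d) mod int n else x + d)"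

definition gadj :: "nat \<Rightarrow> nat \<Rightarrow> int set \<Rightarrow> int list \<Rightarrow> int list \<Rightarrow> bool" where
  "gadj n m S u v \<longleftrightarrow> u \<in> gvert n m S \<and> v \<in> gvert n m S \<and>
     (\<exists>i\<le>m. \<exists>d\<in>{1, -1}. (\<forall>j<m+2. j \<noteq> i \<and> j \<noteq> Suc i \<longrightarrow> u ! j = v ! j)
        \<and> u ! i = coord_add n m i (v ! i) d
        \<and> u ! Suc i = coord_add n m (Suc i) (v ! Suc i) (- d))"

text \<open>Graph distance (\<infinity> if not connected by a walk).\<close>
definition gdist :: "nat \<Rightarrow> nat \<Rightarrow> int set \<Rightarrow> int list \<Rightarrow> int list \<Rightarrow> enat" where
  "gdist n m S u v = (INF k \<in> {k. (gadj n m S ^^ k) u v}. enat k)"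

definition gdiam :: "nat \<Rightarrow> nat \<Rightarrow> int set \<Rightarrow> enat" where
  "gdiam n m S = (SUP u \<in> gvert n m S. SUP v \<in> gvert n m S. gdist n m S u v)"

definition gecc :: "nat \<Rightarrow> nat \<Rightarrow> int set \<Rightarrow> int list \<Rightarrow> enat" where
  "gecc n m S u = (SUP v \<in> gvert n m S. gdist n m S u v)"

definition yoke_S :: "int set" where "yoke_S = {0, 1}"
definition dyoke_S :: "int set" where "dyoke_S = {-1, 0, 1}"

end

theory Submission imports Defs begin

text \<open>Between vertices of these graphs, with the middle coordinates ranging over an integer
  interval \<open>{lo..hi}\<close> with \<open>lo < hi\<close>, a walk is the same as a sequence of unit transfers along the
  edges \<open>i, i+1\<close> of the path \<open>0, \<dots>, m+1\<close>. A walk from \<open>a\<close> to \<open>b\<close> thus induces a flow \<open>f\<close> on these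
  edges whose boundary is the displacement \<open>b - a\<close>, and the walk is at least as long as the
  total flow \<open>\<Sum>|f i|\<close>; conversely, any such flow can be realised greedily by a walk of exactly
  that length without leaving the interval. Hence the distance only depends on the displacement
  and is the minimal cost of a flow with that boundary. The displacements of pairs of Yoke
  vertices are exactly the dYoke vertices, read as displacements from \<open>0\<close>, so the diameter of
  \<open>Y\<^sub>n\<^sub>,\<^sub>m\<close> is the eccentricity of \<open>0\<close> in \<open>Z\<^sub>n\<^sub>,\<^sub>m\<close>.\<close>

lemma sum_lessThan_add_2_split:
  "(\<Sum>j<(m::nat) + 2. h j) = h 0 + (\<Sum>j\<in>{1..m}. h j) + (h (m + 1) :: 'a :: comm_monoid_add)"
proof -
  have "(\<Sum>j<Suc m. h j) = h 0 + (\<Sum>j\<in>{1..m}. h j)"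
    by (induction m) (simp_all add: add.assoc)
  then show ?thesis by (simp add: add.commute)
qed

lemma coord_add_dvd: "int n dvd coord_add n m j x d - (x + d)"
proof -
  have "int n dvd (x + d) mod int n - (x + d)"
    by (simp add: mod_eq_dvd_iff[symmetric])
  then show ?thesis by (simp add: coord_add_def)
qed

text \<open>\<open>f i\<close> is the net amount moved from coordinate \<open>i + 1\<close> to coordinate \<open>i\<close>; the end coordinates
  are only determined modulo \<open>n\<close>.\<close>
definition is_flow :: "nat \<Rightarrow> nat \<Rightarrow> int list \<Rightarrow> int list \<Rightarrow> (nat \<Rightarrow> int) \<Rightarrow> bool" where
  "is_flow n m a b f \<longleftrightarrow> int n dvd b!0 - a!0 - f 0 \<and> int n dvd b!(m+1) - a!(m+1) + f m
     \<and> (\<forall>j\<in>{1..m}. b!j - a!j = f j - f (j - 1))"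

definition flow_cost :: "nat \<Rightarrow> (nat \<Rightarrow> int) \<Rightarrow> int" where
  "flow_cost m f = (\<Sum>i\<le>m. \<bar>f i\<bar>)"

lemma is_flow_refl: "is_flow n m a a (\<lambda>_. 0)"
  by (simp add: is_flow_def)

lemma is_flow_sym: "is_flow n m a b f \<Longrightarrow> is_flow n m b a (\<lambda>i. - f i)"
  unfolding is_flow_def
proof (elim conjE, intro conjI ballI)
  assume "int n dvd b!0 - a!0 - f 0"
  then show "int n dvd a!0 - b!0 - - f 0"
    using dvd_minus_iff[of "int n" "b!0 - a!0 - f 0"] by (simp add: algebra_simps)
next
  assume "int n dvd b!(m+1) - a!(m+1) + f m"
  then show "int n dvd a!(m+1) - b!(m+1) + - f m"
    using dvd_minus_iff[of "int n" "b!(m+1) - a!(m+1) + f m"] by (simp add: algebra_simps)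
qed force

lemma is_flow_trans:
  "is_flow n m a b f \<Longrightarrow> is_flow n m b c g \<Longrightarrow> is_flow n m a c (\<lambda>i. f i + g i)"
  unfolding is_flow_def
proof (elim conjE, intro conjI ballI)
  assume "int n dvd b!0 - a!0 - f 0" "int n dvd c!0 - b!0 - g 0"
  from dvd_add[OF this] show "int n dvd c!0 - a!0 - (f 0 + g 0)" by (simp add: algebra_simps)
next
  assume "int n dvd b!(m+1) - a!(m+1) + f m" "int n dvd c!(m+1) - b!(m+1) + g m"
  from dvd_add[OF this] show "int n dvd c!(m+1) - a!(m+1) + (f m + g m)" by (simp add: algebra_simps)
next
  fix j :: nat
  assume "\<forall>j\<in>{1..m}. b!j - a!j = f j - f (j - 1)" "\<forall>j\<in>{1..m}. c!j - b!j = g j - g (j - 1)"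
    "j \<in> {1..m}"
  then show "c!j - a!j = f j + g j - (f (j - 1) + g (j - 1))" by force
qed

lemma is_flow_edge:
  assumes "i \<le> m" and "\<forall>j<m+2. j \<noteq> i \<and> j \<noteq> Suc i \<longrightarrow> u!j = v!j"
    and "u!i = coord_add n m i (v!i) d" and "u!Suc i = coord_add n m (Suc i) (v!Suc i) (- d)"
  shows "is_flow n m u v (\<lambda>j. if j = i then - d else 0)"
  unfolding is_flow_def
proof (intro conjI ballI)
  show "int n dvd v!0 - u!0 - (if 0 = i then - d else 0)"
    using assms coord_add_dvd[of n m 0 "v!0" d] dvd_minus_iff
    by (cases "i = 0") (auto simp: algebra_simps)
  show "int n dvd v!(m+1) - u!(m+1) + (if m = i then - d else 0)"
    using assms coord_add_dvd[of n m "m+1" "v!(m+1)" "-d"] dvd_minus_iff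
    by (cases "i = m") (auto simp: algebra_simps)
  fix j assume "j \<in> {1..m}"
  then show "v!j - u!j = (if j = i then - d else 0) - (if j - 1 = i then - d else 0)"
    using assms by (auto simp: coord_add_def)
qed

lemma is_flow_sum_dvd:
  assumes "is_flow n m a b f"
  shows "int n dvd (\<Sum>j<m+2. b!j) - (\<Sum>j<m+2. a!j)"
proof -
  have mid: "(\<Sum>j\<in>{1..m}. b!j - a!j) = f m - f 0"
    using assms sum_telescope''[of 0 m f] by (simp add: is_flow_def)
  have "(\<Sum>j<m+2. b!j) - (\<Sum>j<m+2. a!j) = (b!0 - a!0 - f 0) + (b!(m+1) - a!(m+1) + f m)"
    unfolding sum_lessThan_add_2_split[where m=m] using mid by (simp add: sum_subtractf algebra_simps)
  then show ?thesis using assms unfolding is_flow_def by (metis dvd_add)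
qed

lemma flow_cost_nonneg: "flow_cost m f \<ge> 0"
  by (simp add: flow_cost_def sum_nonneg)

lemma flow_cost_add_le: "flow_cost m (\<lambda>i. f i + g i) \<le> flow_cost m f + flow_cost m g"
  unfolding flow_cost_def sum.distrib[symmetric] by (rule sum_mono) (rule abs_triangle_ineq)

lemma flow_cost_edge: "i \<le> m \<Longrightarrow> flow_cost m (\<lambda>j. if j = i then d else 0) = \<bar>d\<bar>"
  by (simp add: flow_cost_def if_distrib[of abs] cong: if_cong)

lemma flow_cost_update:
  "i \<le> m \<Longrightarrow> flow_cost m (f(i := x)) = flow_cost m f - \<bar>f i\<bar> + \<bar>x\<bar>"
  unfolding flow_cost_def by (simp add: sum.remove[of "{..m}" i])

lemma walk_imp_flow:
  assumes "(gadj n m S ^^ k) a b"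
  shows "\<exists>f. is_flow n m a b f \<and> flow_cost m f \<le> int k"
  using assms
proof (induction k arbitrary: b)
  case 0
  then show ?case using is_flow_refl by (fastforce simp: flow_cost_def)
next
  case (Suc k)
  then obtain c where "(gadj n m S ^^ k) a c" and "gadj n m S c b"
    by (auto elim: relpowp_Suc_E)
  from Suc.IH[OF this(1)] obtain f where f: "is_flow n m a c f" "flow_cost m f \<le> int k"
    by blast
  from \<open>gadj n m S c b\<close> obtain i d where "i \<le> m" "d \<in> {1, -1}"
    "\<forall>j<m+2. j \<noteq> i \<and> j \<noteq> Suc i \<longrightarrow> c!j = b!j"
    "c!i = coord_add n m i (b!i) d" "c!Suc i = coord_add n m (Suc i) (b!Suc i) (- d)"
    unfolding gadj_def by blast
  then have edge: "is_flow n m c b (\<lambda>j. if j = i then - d else 0)"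
    and edge_cost: "flow_cost m (\<lambda>j. if j = i then - d else 0) = 1"
    using is_flow_edge flow_cost_edge by auto
  have "is_flow n m a b (\<lambda>j. f j + (if j = i then - d else 0))"
    using is_flow_trans[OF f(1) edge] .
  moreover have "flow_cost m (\<lambda>j. f j + (if j = i then - d else 0)) \<le> int (Suc k)"
    using flow_cost_add_le[of m f "\<lambda>j. if j = i then - d else 0"] f(2) edge_cost by linarith
  ultimately show ?case by (rule exI[where x="\<lambda>j. f j + (if j = i then - d else 0)", OF conjI])
qed

text \<open>Walking right from \<open>i\<^sub>0\<close> past coordinates sitting at \<open>lo\<close>, the flow cannot decrease (those
  coordinates can only grow), and symmetrically walking left past coordinates at \<open>hi\<close>.\<close>
lemma exists_pushable_edge:
  fixes x y f :: "nat \<Rightarrow> int"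
  assumes "lo < hi"
    and bounds: "\<And>j. j \<in> {1..m} \<Longrightarrow> x j \<in> {lo..hi} \<and> y j \<in> {lo..hi} \<and> y j - x j = f j - f (j - 1)"
    and "i\<^sub>0 \<le> m" "f i\<^sub>0 > 0"
  shows "\<exists>i\<le>m. f i > 0 \<and> (1 \<le> i \<longrightarrow> x i < hi) \<and> (i + 1 \<le> m \<longrightarrow> lo < x (i + 1))"
proof -
  have rightwards: "?thesis" if "i \<le> m" "f i > 0" "1 \<le> i \<longrightarrow> x i < hi" for i
    using that
  proof (induction "m - i" arbitrary: i)
    case 0
    then show ?case by auto
  next
    case (Suc k)
    show ?case
    proof (cases "lo < x (i + 1)")
      case True
      with Suc.prems show ?thesis by auto
    next
      case False
      from Suc.hyps have "i + 1 \<le> m" by simp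
      with False bounds[of "i + 1"] have "x (i + 1) = lo" "f (i + 1) \<ge> f i" by auto
      moreover have "k = m - (i + 1)" using Suc.hyps(2) by simp
      ultimately show ?thesis using Suc.hyps(1)[of "i + 1"] Suc.prems(2) \<open>i + 1 \<le> m\<close> \<open>lo < hi\<close> by simp
    qed
  qed
  have leftwards: "?thesis" if "i \<le> m" "f i > 0" "i + 1 \<le> m \<longrightarrow> lo < x (i + 1)" for i
    using that
  proof (induction i)
    case 0
    then show ?case by auto
  next
    case (Suc i)
    show ?case
    proof (cases "x (Suc i) < hi")
      case True
      with Suc.prems show ?thesis by auto
    next
      case False
      with Suc.prems bounds[of "Suc i"] have "lo < x (Suc i)" "f i > 0"
        using \<open>lo < hi\<close> by auto
      with Suc.IH Suc.prems show ?thesis by auto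
    qed
  qed
  show ?thesis
  proof (cases "1 \<le> i\<^sub>0 \<longrightarrow> x i\<^sub>0 < hi")
    case True
    with rightwards assms(3,4) show ?thesis by blast
  next
    case False
    with bounds[of i\<^sub>0] assms(3,4) \<open>lo < hi\<close> have "f (i\<^sub>0 - 1) > 0" "lo < x i\<^sub>0" "i\<^sub>0 - 1 \<le> m"
      by auto
    with leftwards[of "i\<^sub>0 - 1"] False show ?thesis by auto
  qed
qed

lemma exists_pushable_edge_signed:
  fixes x y f :: "nat \<Rightarrow> int"
  assumes "lo < hi"
    and bounds: "\<And>j. j \<in> {1..m} \<Longrightarrow> x j \<in> {lo..hi} \<and> y j \<in> {lo..hi} \<and> y j - x j = f j - f (j - 1)"
    and "i\<^sub>0 \<le> m" "f i\<^sub>0 \<noteq> 0"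
  obtains i s where "i \<le> m" "s \<in> {1, -1}" "s * f i > 0"
    "1 \<le> i \<Longrightarrow> x i + s \<in> {lo..hi}" "i + 1 \<le> m \<Longrightarrow> x (i + 1) - s \<in> {lo..hi}"
proof (cases "f i\<^sub>0 > 0")
  case True
  with exists_pushable_edge[of lo hi m x y f, OF assms(1) bounds assms(3)] obtain i where
    "i \<le> m" "f i > 0" "1 \<le> i \<longrightarrow> x i < hi" "i + 1 \<le> m \<longrightarrow> lo < x (i + 1)"
    by blast
  with bounds[of i] bounds[of "i + 1"] show ?thesis by (intro that[of i 1]) simp_all
next
  case False
  have "- hi < - lo" using \<open>lo < hi\<close> by simp
  moreover have "- x j \<in> {- hi..- lo} \<and> - y j \<in> {- hi..- lo} \<and> - y j - - x j = - f j - - f (j - 1)"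
    if "j \<in> {1..m}" for j
    using bounds[OF that] by auto
  moreover have "- f i\<^sub>0 > 0" using assms(4) False by simp
  ultimately obtain i where
    "i \<le> m" "- f i > 0" "1 \<le> i \<longrightarrow> - x i < - lo" "i + 1 \<le> m \<longrightarrow> - hi < - x (i + 1)"
    using exists_pushable_edge[of "- hi" "- lo" m "\<lambda>j. - x j" "\<lambda>j. - y j" "\<lambda>j. - f j"] assms(3)
    by blast
  with bounds[of i] bounds[of "i + 1"] show ?thesis by (intro that[of i "-1"]) simp_all
qed

lemma gvert_sum_dvd: "u \<in> gvert n m S \<Longrightarrow> int n dvd (\<Sum>j<m+2. u!j)"
  unfolding gvert_def by (simp add: dvd_eq_mod_eq_0)

lemma coord_add_cancel:
  assumes "j = 0 \<or> j = m + 1 \<longrightarrow> x \<in> {0..<int n}"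
  shows "coord_add n m j (coord_add n m j x e) (- e) = x"
  using assms by (auto simp: coord_add_def mod_diff_left_eq)

lemma push_unit:
  assumes "n \<ge> 1" and a: "a \<in> gvert n m {lo..hi}" and "i \<le> m" and "s \<in> {1, -1}"
    and left: "1 \<le> i \<Longrightarrow> a!i + s \<in> {lo..hi}" and right: "i + 1 \<le> m \<Longrightarrow> a!(i + 1) - s \<in> {lo..hi}"
  obtains a' where "gadj n m {lo..hi} a a'" "is_flow n m a a' (\<lambda>j. if j = i then s else 0)"
proof -
  define a' where "a' = a[i := coord_add n m i (a!i) s, Suc i := coord_add n m (Suc i) (a!Suc i) (- s)]"
  have len: "length a = m + 2" "length a' = m + 2" using a by (simp_all add: gvert_def a'_def)
  have ends: "a!0 \<in> {0..<int n}" "a!(m+1) \<in> {0..<int n}" using a by (simp_all add: gvert_def)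
  have nth_a': "a'!j = (if j = i then coord_add n m i (a!i) s
      else if j = Suc i then coord_add n m (Suc i) (a!Suc i) (- s) else a!j)" if "j < m + 2" for j
    using that len \<open>i \<le> m\<close> by (simp add: a'_def nth_list_update)
  have same: "\<forall>j<m+2. j \<noteq> i \<and> j \<noteq> Suc i \<longrightarrow> a!j = a'!j" by (simp add: nth_a')
  have back_i: "a!i = coord_add n m i (a'!i) (- s)"
    using \<open>i \<le> m\<close> ends by (simp add: nth_a' coord_add_cancel)
  have back_Suc_i: "a!Suc i = coord_add n m (Suc i) (a'!Suc i) (- (- s))"
    using \<open>i \<le> m\<close> ends coord_add_cancel[of "Suc i" m "a!Suc i" n "- s"] by (simp add: nth_a')
  have flow: "is_flow n m a a' (\<lambda>j. if j = i then s else 0)"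
    using is_flow_edge[OF \<open>i \<le> m\<close> same back_i back_Suc_i] by (simp only: minus_minus)
  have "a' \<in> gvert n m {lo..hi}"
    unfolding gvert_def
  proof (intro CollectI conjI ballI)
    show "a'!0 \<in> {0..<int n}" "a'!(m+1) \<in> {0..<int n}"
      using ends \<open>n \<ge> 1\<close> \<open>i \<le> m\<close> by (auto simp: nth_a' coord_add_def)
    show "a'!j \<in> {lo..hi}" if "j \<in> {1..m}" for j
      using that a left right by (auto simp: nth_a' gvert_def coord_add_def)
    from is_flow_sum_dvd[OF flow] gvert_sum_dvd[OF a] have "int n dvd (\<Sum>j<m+2. a'!j) - (\<Sum>j<m+2. a!j) + (\<Sum>j<m+2. a!j)"
      by (rule dvd_add)
    then show "(\<Sum>j<m+2. a'!j) mod int n = 0" by (simp only: diff_add_cancel dvd_imp_mod_0)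
  qed (use len in simp)
  then have "gadj n m {lo..hi} a a'"
    unfolding gadj_def using \<open>s \<in> {1, -1}\<close>
    by (intro conjI a exI[of _ i] bexI[of _ "- s"] \<open>i \<le> m\<close> same back_i back_Suc_i) auto
  then show ?thesis using flow by (rule that)
qed

lemma eq_of_dvd_diff:
  fixes x y :: int
  assumes "x \<in> {0..<k}" "y \<in> {0..<k}" "k dvd y - x"
  shows "x = y"
  using assms mod_eq_dvd_iff[of y k x] by (simp add: mod_pos_pos_trivial)

lemma is_flow_zero_imp_eq:
  assumes a: "a \<in> gvert n m S" and b: "b \<in> gvert n m S"
    and flow: "is_flow n m a b f" and zero: "\<forall>i\<le>m. f i = 0"
  shows "a = b"
proof (rule nth_equalityI)
  show "length a = length b" using a b by (simp add: gvert_def)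
  fix j assume "j < length a"
  then consider "j = 0 \<or> j = m + 1" | "j \<in> {1..m}"
    using a by (force simp: gvert_def)
  then show "a!j = b!j"
  proof cases
    case 1
    then show ?thesis
      using a b flow zero by (elim disjE) (auto simp: gvert_def is_flow_def intro: eq_of_dvd_diff)
  next
    case 2
    with flow have "b!j - a!j = f j - f (j - 1)" by (simp add: is_flow_def)
    moreover have "f j = 0" "f (j - 1) = 0" using zero 2 by auto
    ultimately show ?thesis by simp
  qed
qed

lemma flow_imp_walk:
  assumes "lo < hi" "n \<ge> 1"
    and "a \<in> gvert n m {lo..hi}" "b \<in> gvert n m {lo..hi}" "is_flow n m a b f"
  shows "(gadj n m {lo..hi} ^^ nat (flow_cost m f)) a b"
  using assms(3-5)
proof (induction "nat (flow_cost m f)" arbitrary: a f)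
  case 0
  then have "flow_cost m f = 0" using flow_cost_nonneg[of m f] by linarith
  then have "\<forall>i\<le>m. f i = 0" by (simp add: flow_cost_def sum_nonneg_eq_0_iff)
  with 0 show ?case using is_flow_zero_imp_eq by (metis relpowp_0_I)
next
  case (Suc N)
  then have "flow_cost m f \<noteq> 0" by linarith
  then obtain i\<^sub>0 where "i\<^sub>0 \<le> m" "f i\<^sub>0 \<noteq> 0"
    unfolding flow_cost_def by (metis abs_zero atMost_iff sum.neutral)
  moreover have "a!j \<in> {lo..hi} \<and> b!j \<in> {lo..hi} \<and> b!j - a!j = f j - f (j - 1)" if "j \<in> {1..m}" for j
    using Suc.prems that by (simp add: gvert_def is_flow_def)
  ultimately obtain i s where i: "i \<le> m" and s: "s \<in> {1, -1}" "s * f i > 0"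
    and left: "1 \<le> i \<Longrightarrow> a!i + s \<in> {lo..hi}"
    and right: "i + 1 \<le> m \<Longrightarrow> a!(i + 1) - s \<in> {lo..hi}"
    using exists_pushable_edge_signed[OF \<open>lo < hi\<close>, of m "(!) a" "(!) b" f] by blast
  obtain a' where adj: "gadj n m {lo..hi} a a'" and step: "is_flow n m a a' (\<lambda>j. if j = i then s else 0)"
    using push_unit[OF \<open>n \<ge> 1\<close> Suc.prems(1) i s(1) left right] .
  have "(\<lambda>j. - (if j = i then s else 0) + f j) = f(i := f i - s)" by auto
  then have flow': "is_flow n m a' b (f(i := f i - s))"
    using is_flow_trans[OF is_flow_sym[OF step] Suc.prems(3)] by simp
  have "\<bar>f i - s\<bar> = \<bar>f i\<bar> - 1" using s by auto
  then have "N = nat (flow_cost m (f(i := f i - s)))"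
    using flow_cost_update[OF i] Suc.hyps(2) by simp
  moreover have "a' \<in> gvert n m {lo..hi}" using adj by (simp add: gadj_def)
  ultimately have "(gadj n m {lo..hi} ^^ N) a' b"
    using Suc.hyps(1) Suc.prems(2) flow' by blast
  with adj show ?case unfolding Suc.hyps(2)[symmetric] by (rule relpowp_Suc_I2)
qed

definition displacement :: "nat \<Rightarrow> nat \<Rightarrow> int list \<Rightarrow> int list \<Rightarrow> int list" where
  "displacement n m u v = map (\<lambda>j. coord_add n m j (v!j) (- (u!j))) [0..<m+2]"

lemma nth_displacement: "j < m + 2 \<Longrightarrow> displacement n m u v ! j = coord_add n m j (v!j) (- (u!j))"
  unfolding displacement_def by (simp del: upt_Suc)

lemma length_displacement [simp]: "length (displacement n m u v) = m + 2"
  by (simp add: displacement_def del: upt_Suc)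

lemma is_flow_cong_displacement:
  assumes "displacement n m a b = displacement n m u v"
  shows "is_flow n m a b f \<longleftrightarrow> is_flow n m u v f"
proof -
  have entry: "coord_add n m j (b!j) (- (a!j)) = coord_add n m j (v!j) (- (u!j))" if "j < m + 2" for j
    using assms nth_displacement[OF that] by metis
  have "(b!0 - a!0) mod int n = (v!0 - u!0) mod int n"
    using entry[of 0] by (simp add: coord_add_def)
  then have "int n dvd b!0 - a!0 - f 0 \<longleftrightarrow> int n dvd v!0 - u!0 - f 0"
    unfolding dvd_eq_mod_eq_0 by (metis mod_diff_left_eq)
  moreover have "(b!(m+1) - a!(m+1)) mod int n = (v!(m+1) - u!(m+1)) mod int n"
    using entry[of "m + 1"] by (simp add: coord_add_def)
  then have "int n dvd b!(m+1) - a!(m+1) + f m \<longleftrightarrow> int n dvd v!(m+1) - u!(m+1) + f m"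
    unfolding dvd_eq_mod_eq_0 by (metis mod_add_left_eq)
  moreover have "b!j - a!j = v!j - u!j" if "j \<in> {1..m}" for j
    using that entry[of j] by (simp add: coord_add_def)
  ultimately show ?thesis unfolding is_flow_def by auto
qed

lemma gdist_le_of_displacement_eq:
  assumes "lo < hi" "n \<ge> 1" "u \<in> gvert n m {lo..hi}" "v \<in> gvert n m {lo..hi}"
    and "displacement n m u v = displacement n m a b"
  shows "gdist n m {lo..hi} u v \<le> gdist n m S a b"
  unfolding gdist_def
proof (rule INF_greatest)
  fix k assume "k \<in> {k. (gadj n m S ^^ k) a b}"
  then obtain f where "is_flow n m a b f" and cost: "flow_cost m f \<le> int k"
    using walk_imp_flow by blast
  then have "is_flow n m u v f" using is_flow_cong_displacement[OF assms(5)] by blast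
  then have "(gadj n m {lo..hi} ^^ nat (flow_cost m f)) u v"
    using flow_imp_walk assms(1-4) by blast
  then have "(INF k \<in> {k. (gadj n m {lo..hi} ^^ k) u v}. enat k) \<le> enat (nat (flow_cost m f))"
    by (intro INF_lower) simp
  also have "\<dots> \<le> enat k" using cost by simp
  finally show "(INF k \<in> {k. (gadj n m {lo..hi} ^^ k) u v}. enat k) \<le> enat k" .
qed

lemma sum_coord_add_dvd:
  "int n dvd (\<Sum>j<k. coord_add n m j (x j) (d j)) - (\<Sum>j<k. x j + d j)"
  unfolding sum_subtractf[symmetric] by (rule dvd_sum) (rule coord_add_dvd)

lemma displacement_mem_gvert:
  assumes "n \<ge> 1" and u: "u \<in> gvert n m S" and v: "v \<in> gvert n m S"
    and diff: "\<And>x y. x \<in> S \<Longrightarrow> y \<in> S \<Longrightarrow> y - x \<in> T"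
  shows "displacement n m u v \<in> gvert n m T"
  unfolding gvert_def
proof (intro CollectI conjI ballI)
  show "length (displacement n m u v) = m + 2" by simp
  show "displacement n m u v ! 0 \<in> {0..<int n}" "displacement n m u v ! (m + 1) \<in> {0..<int n}"
    using \<open>n \<ge> 1\<close> by (simp_all add: nth_displacement coord_add_def)
  show "displacement n m u v ! j \<in> T" if "j \<in> {1..m}" for j
    using that u v diff by (simp add: nth_displacement gvert_def coord_add_def)
  have "int n dvd (\<Sum>j<m+2. displacement n m u v ! j) - (\<Sum>j<m+2. v!j + - (u!j))"
    using sum_coord_add_dvd[where k="m + 2" and x="(!) v" and d="\<lambda>j. - (u!j)"]
    by (simp add: nth_displacement)
  moreover have "int n dvd (\<Sum>j<m+2. v!j + - (u!j))"
    using dvd_diff[OF gvert_sum_dvd[OF v] gvert_sum_dvd[OF u]]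
    by (simp only: sum.distrib sum_negf diff_conv_add_uminus)
  ultimately have "int n dvd (\<Sum>j<m+2. displacement n m u v ! j)"
    by (metis dvd_add diff_add_cancel)
  then show "(\<Sum>j<m+2. displacement n m u v ! j) mod int n = 0"
    by (simp only: dvd_eq_mod_eq_0)
qed

lemma displacement_from_zero:
  assumes "w \<in> gvert n m S"
  shows "displacement n m (replicate (m + 2) 0) w = w"
proof (rule nth_equalityI)
  show "length (displacement n m (replicate (m + 2) 0) w) = length w"
    using assms by (simp add: gvert_def del: replicate_Suc)
  fix j assume "j < length (displacement n m (replicate (m + 2) 0) w)"
  then have "j < m + 2" by simp
  then have "displacement n m (replicate (m + 2) 0) w ! j = coord_add n m j (w!j) 0"
    by (simp only: nth_displacement nth_replicate minus_zero)
  then show "displacement n m (replicate (m + 2) 0) w ! j = w!j"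
    using assms by (auto simp: gvert_def coord_add_def)
qed

lemma zero_mem_gvert: "n \<ge> 1 \<Longrightarrow> 0 \<in> S \<Longrightarrow> replicate (m + 2) 0 \<in> gvert n m S"
  by (simp add: gvert_def del: replicate_Suc)

lemma ex_gvert_with_middle:
  assumes "n \<ge> 1" and "\<And>j. j \<in> {1..m} \<Longrightarrow> c j \<in> S"
  shows "\<exists>u\<in>gvert n m S. \<forall>j\<in>{1..m}. u!j = c j"
proof -
  define u where "u = map (\<lambda>j. if j = 0 then (- (\<Sum>k\<in>{1..m}. c k)) mod int n
      else if j = m + 1 then 0 else c j) [0..<m+2]"
  have nth_u: "u!j = (if j = 0 then (- (\<Sum>k\<in>{1..m}. c k)) mod int n
      else if j = m + 1 then 0 else c j)" if "j < m + 2" for j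
    using that by (simp add: u_def del: upt_Suc)
  have "u \<in> gvert n m S"
    unfolding gvert_def
  proof (intro CollectI conjI ballI)
    show "length u = m + 2" "u!0 \<in> {0..<int n}" "u!(m+1) \<in> {0..<int n}"
      using \<open>n \<ge> 1\<close> by (simp_all add: u_def del: upt_Suc)
    show "u!j \<in> S" if "j \<in> {1..m}" for j
      using that assms(2) by (simp add: nth_u)
    have "(\<Sum>j\<in>{1..m}. u!j) = (\<Sum>k\<in>{1..m}. c k)"
      by (rule sum.cong) (simp_all add: nth_u)
    then have "(\<Sum>j<m+2. u!j) = (- (\<Sum>k\<in>{1..m}. c k)) mod int n - (- (\<Sum>k\<in>{1..m}. c k))"
      unfolding sum_lessThan_add_2_split[where m=m] by (simp add: nth_u)
    then have "int n dvd (\<Sum>j<m+2. u!j)"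
      by (metis dvd_minus_mod dvd_minus_iff minus_diff_eq)
    then show "(\<Sum>j<m+2. u!j) mod int n = 0"
      by (simp only: dvd_eq_mod_eq_0)
  qed
  moreover have "\<forall>j\<in>{1..m}. u!j = c j"
    by (simp add: nth_u)
  ultimately show ?thesis by blast
qed

text \<open>Put the \<open>1\<close>s of \<open>u\<close> where \<open>w\<close> is \<open>-1\<close> and let \<open>v = u + w\<close>.\<close>
lemma ex_displacement_eq:
  assumes "n \<ge> 1" and w: "w \<in> gvert n m {-1..1}"
  obtains u v where "u \<in> gvert n m {0..1}" "v \<in> gvert n m {0..1}" "displacement n m u v = w"
proof -
  have "\<exists>u\<in>gvert n m {0..1}. \<forall>j\<in>{1..m}. u!j = (if w!j = -1 then 1 else 0)"
    by (rule ex_gvert_with_middle) (use \<open>n \<ge> 1\<close> in auto)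
  then obtain u where u: "u \<in> gvert n m {0..1}"
    and u_mid: "\<forall>j\<in>{1..m}. u!j = (if w!j = -1 then 1 else 0)"
    by blast
  define v where "v = map (\<lambda>j. coord_add n m j (w!j) (u!j)) [0..<m+2]"
  have nth_v: "v!j = coord_add n m j (w!j) (u!j)" if "j < m + 2" for j
    using that by (simp add: v_def del: upt_Suc)
  have "v \<in> gvert n m {0..1}"
    unfolding gvert_def
  proof (intro CollectI conjI ballI)
    show "length v = m + 2" by (simp add: v_def del: upt_Suc)
    show "v!0 \<in> {0..<int n}" "v!(m+1) \<in> {0..<int n}"
      using \<open>n \<ge> 1\<close> by (simp_all add: nth_v coord_add_def)
    show "v!j \<in> {0..1}" if "j \<in> {1..m}" for j
    proof -
      have "w!j \<in> {-1..1}" using w that by (simp add: gvert_def)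
      then show ?thesis using that u_mid by (auto simp: nth_v coord_add_def)
    qed
    have "int n dvd (\<Sum>j<m+2. v!j) - (\<Sum>j<m+2. w!j + u!j)"
      using sum_coord_add_dvd[where k="m + 2" and x="(!) w" and d="(!) u"] by (simp add: nth_v)
    moreover have "int n dvd (\<Sum>j<m+2. w!j + u!j)"
      using gvert_sum_dvd[OF w] gvert_sum_dvd[OF u] by (simp only: sum.distrib dvd_add)
    ultimately have "int n dvd (\<Sum>j<m+2. v!j)"
      by (metis dvd_add diff_add_cancel)
    then show "(\<Sum>j<m+2. v!j) mod int n = 0"
      by (simp only: dvd_eq_mod_eq_0)
  qed
  moreover have "displacement n m u v = w"
  proof (rule nth_equalityI)
    show "length (displacement n m u v) = length w" using w by (simp add: gvert_def)
    fix j assume "j < length (displacement n m u v)"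
    then have "j < m + 2" by simp
    moreover have "j = 0 \<or> j = m + 1 \<longrightarrow> w!j \<in> {0..<int n}" using w by (auto simp: gvert_def)
    ultimately show "displacement n m u v ! j = w!j"
      by (simp add: nth_displacement nth_v coord_add_cancel)
  qed
  ultimately show ?thesis by (rule that[OF u])
qed

lemma gdist_yoke_le_gecc_dyoke:
  assumes "n \<ge> 1" "u \<in> gvert n m {0..1}" "v \<in> gvert n m {0..1}"
  shows "gdist n m {0..1} u v \<le> gecc n m {-1..1} (replicate (m + 2) 0)"
proof -
  have w: "displacement n m u v \<in> gvert n m {-1..1}"
    using displacement_mem_gvert[OF assms] by auto
  then have "gdist n m {0..1} u v \<le> gdist n m {-1..1} (replicate (m + 2) 0) (displacement n m u v)"
    using gdist_le_of_displacement_eq[OF _ assms] displacement_from_zero by simp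
  also have "\<dots> \<le> gecc n m {-1..1} (replicate (m + 2) 0)"
    unfolding gecc_def using w by (rule SUP_upper)
  finally show ?thesis .
qed

lemma gdist_dyoke_le_gdiam_yoke:
  assumes "n \<ge> 1" and w: "w \<in> gvert n m {-1..1}"
  shows "gdist n m {-1..1} (replicate (m + 2) 0) w \<le> gdiam n m {0..1}"
proof -
  obtain u v where uv: "u \<in> gvert n m {0..1}" "v \<in> gvert n m {0..1}" "displacement n m u v = w"
    using ex_displacement_eq[OF assms] .
  have z: "replicate (m + 2) 0 \<in> gvert n m {-1..1}"
    using assms by (intro zero_mem_gvert) auto
  have "displacement n m (replicate (m + 2) 0) w = displacement n m u v"
    using displacement_from_zero[OF w] uv(3) by simp
  then have "gdist n m {-1..1} (replicate (m + 2) 0) w \<le> gdist n m {0..1} u v"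
    using gdist_le_of_displacement_eq[OF _ \<open>n \<ge> 1\<close> z w] by simp
  also have "\<dots> \<le> gdiam n m {0..1}"
    unfolding gdiam_def using uv by (blast intro: SUP_upper2)
  finally show ?thesis .
qed

theorem theorem4p5:
  fixes n m :: nat
  assumes "n \<ge> 1"
  shows "gdiam n m yoke_S = gecc n m dyoke_S (replicate (m + 2) 0)"
proof -
  have Y: "yoke_S = {0..1}" and Z: "dyoke_S = {-1..1}"
    by (auto simp: yoke_S_def dyoke_S_def)
  show ?thesis
    unfolding Y Z
  proof (rule antisym)
    show "gdiam n m {0..1} \<le> gecc n m {-1..1} (replicate (m + 2) 0)"
      unfolding gdiam_def using gdist_yoke_le_gecc_dyoke[OF assms] by (intro SUP_least)
    show "gecc n m {-1..1} (replicate (m + 2) 0) \<le> gdiam n m {0..1}"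
      unfolding gecc_def using gdist_dyoke_le_gdiam_yoke[OF assms] by (intro SUP_least)
  qed
qed

end
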